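(* Let $\rho$ be an increasing continuous function on $[0,\infty)$, continuously differentiable on $(0,\infty)$, with $\lim_{x\to0}\rho'(x)=0$. Then for all sufficiently small positive $x$ and $x^*$ with $x<x^*$, setting $z=(1-\rho(x))e^{ix}$, we have $2|e^{ix^*}-z|\ge\rho(x^* )$. *)

theory Defs
  imports "HOL-Analysis.Analysis"
begin

end

theory Submission
  imports Defs
begin

text \<open>Put \<open>t = x* - x\<close> and \<open>a = \<rho>(x)\<close>; after rotating by \<open>e^{-ix}\<close> the distance in question is
  \<open>|e^{it} - (1 - a)|\<close>. Since \<open>\<rho>' \<rightarrow> 0\<close>, the mean value theorem gives \<open>\<rho>(x*) \<le> a + t/3\<close> near \<open>0\<close>,
  so it suffices that \<open>2|e^{it} - (1 - a)| \<ge> a + t/3\<close> for small \<open>t\<close>. The distance is at least its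
  imaginary part \<open>sin t \<ge> t/3\<close> and, when \<open>a \<le> 1\<close>, at least \<open>|a|\<close>, because its square is
  \<open>a\<^sup>2 + 2(1 - a)(1 - cos t)\<close>; when \<open>a > 1\<close> its real part \<open>a - (1 - cos t)\<close> alone suffices.\<close>

lemma sin_ge_third:
  fixes t :: real
  assumes "0 \<le> t" "t \<le> 1"
  shows "t / 3 \<le> sin t"
proof -
  have "\<bar>sin t - (\<Sum>m<3. sin_coeff m * t ^ m)\<bar> \<le> inverse (fact 3) * \<bar>t\<bar> ^ 3"
    by (rule Maclaurin_sin_bound)
  moreover have "(\<Sum>m<3. sin_coeff m * t ^ m) = t"
    by (simp add: eval_nat_numeral sin_coeff_def)
  moreover have "t ^ 3 \<le> t"
  proof -
    have "t * t \<le> 1"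
      using assms by (simp add: mult_le_one)
    then show ?thesis
      using assms mult_right_mono[of "t * t" 1 t] by (simp add: power3_eq_cube)
  qed
  ultimately have "\<bar>sin t - t\<bar> \<le> t / 6"
    using assms by (simp add: fact_numeral)
  then have "- (sin t - t) \<le> t / 6"
    by (rule abs_le_D2)
  then show ?thesis
    using assms by simp
qed

lemma one_minus_half_square_le_cos: "1 - t\<^sup>2 / 2 \<le> cos (t::real)"
proof -
  have "(sin (t / 2))\<^sup>2 \<le> (t / 2)\<^sup>2"
    using abs_sin_x_le_abs_x[of "t / 2"] by (metis abs_ge_zero power2_abs power_mono)
  then show ?thesis
    using cos_double_sin[of "t / 2"] by (simp add: power_divide)
qed

lemma norm_exp_i_diff_rotate:
  "cmod (exp (\<i> * complex_of_real y) - r * exp (\<i> * complex_of_real x))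
     = cmod (exp (\<i> * complex_of_real (y - x)) - r)"
proof -
  have "exp (\<i> * complex_of_real y) - r * exp (\<i> * complex_of_real x)
      = exp (\<i> * complex_of_real x) * (exp (\<i> * complex_of_real (y - x)) - r)"
    by (simp add: algebra_simps flip: exp_add)
  then show ?thesis
    by (simp add: norm_mult)
qed

lemma norm_exp_i_minus_real_ge:
  fixes a t :: real
  assumes "0 \<le> t" "t \<le> 1/2"
  shows "a + t / 3 \<le> 2 * cmod (exp (\<i> * complex_of_real t) - complex_of_real (1 - a))"
proof -
  define w where "w = exp (\<i> * complex_of_real t) - complex_of_real (1 - a)"
  have Re_w: "Re w = cos t - (1 - a)" and Im_w: "Im w = sin t"
    by (simp_all add: w_def Re_exp Im_exp)
  have sin_bound: "t / 3 \<le> cmod w"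
    using sin_ge_third[of t] assms abs_Im_le_cmod[of w] Im_w by linarith
  have cos_bound: "cos t - (1 - a) \<le> cmod w"
    using abs_Re_le_cmod[of w] Re_w by linarith
  have "a + t / 3 \<le> 2 * cmod w"
  proof (cases "a \<le> 1")
    case True
    have "(cmod w)\<^sup>2 = (cos t - (1 - a))\<^sup>2 + (sin t)\<^sup>2"
      by (simp add: cmod_power2 Re_w Im_w)
    also have "\<dots> = a\<^sup>2 + 2 * (1 - a) * (1 - cos t)"
      using sin_cos_squared_add[of t] by (simp add: power2_eq_square algebra_simps)
    also have "\<dots> \<ge> a\<^sup>2"
      using True by simp
    finally have "\<bar>a\<bar> \<le> cmod w"
      using abs_le_square_iff[of a "cmod w"] by simp
    then show ?thesis
      using sin_bound by linarith
  next
    case False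
    have "t\<^sup>2 \<le> (1/2)\<^sup>2"
      using assms by (intro power_mono) auto
    then have "7 / 8 \<le> cos t"
      using one_minus_half_square_le_cos[of t] by (simp add: power_divide)
    then show ?thesis
      using False cos_bound assms by linarith
  qed
  then show ?thesis
    by (simp only: w_def)
qed

lemma increments_small_near_0:
  fixes f :: "real \<Rightarrow> real"
  assumes diff: "f differentiable_on {0<..}"
    and lim: "(deriv f \<longlongrightarrow> 0) (at_right 0)"
    and "0 < \<epsilon>"
  shows "\<exists>\<delta>>0. \<forall>x y. 0 < x \<longrightarrow> x < y \<longrightarrow> y < \<delta> \<longrightarrow> \<bar>f y - f x\<bar> \<le> \<epsilon> * (y - x)"
proof -
  obtain \<delta> where "\<delta> > 0" and small: "\<And>z. 0 < z \<Longrightarrow> z < \<delta> \<Longrightarrow> \<bar>deriv f z\<bar> < \<epsilon>"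
    using tendstoD[OF lim \<open>0 < \<epsilon>\<close>] by (auto simp: eventually_at_right_field)
  have deriv: "DERIV f z :> deriv f z" if "0 < z" for z
  proof -
    have "f differentiable at z"
      using diff that differentiable_on_eq_differentiable_at[of "{0<..}" f] by simp
    then show ?thesis
      by (simp add: DERIV_deriv_iff_real_differentiable)
  qed
  have "\<bar>f y - f x\<bar> \<le> \<epsilon> * (y - x)" if "0 < x" "x < y" "y < \<delta>" for x y
  proof -
    obtain z where z: "x < z" "z < y" and mvt: "f y - f x = (y - x) * deriv f z"
      using MVT2[OF \<open>x < y\<close>, of f "deriv f"] deriv \<open>0 < x\<close> by force
    have "\<bar>f y - f x\<bar> = (y - x) * \<bar>deriv f z\<bar>"
      using mvt \<open>x < y\<close> by (simp add: abs_mult)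
    also have "\<dots> \<le> (y - x) * \<epsilon>"
      using small[of z] z that by (intro mult_left_mono) simp_all
    finally show ?thesis
      by (simp add: mult.commute)
  qed
  then show ?thesis
    using \<open>\<delta> > 0\<close> by blast
qed

theorem mainTheorem12:
  fixes \<rho> :: "real \<Rightarrow> real"
  assumes mono: "mono_on {0..} \<rho>"
    and cont: "continuous_on {0..} \<rho>"
    and diff: "\<rho> differentiable_on {0<..}"
    and cont_deriv: "continuous_on {0<..} (deriv \<rho>)"
    and lim: "(deriv \<rho> \<longlongrightarrow> 0) (at_right 0)"
  shows "\<exists>\<delta>>0. \<forall>x xs. 0 < x \<longrightarrow> x < xs \<longrightarrow> xs < \<delta> \<longrightarrow>
           (let z = complex_of_real (1 - \<rho> x) * exp (\<i> * complex_of_real x)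
            in 2 * cmod (exp (\<i> * complex_of_real xs) - z) \<ge> \<rho> xs)"
proof -
  obtain \<delta> where "\<delta> > 0"
    and increment: "\<And>x y. 0 < x \<Longrightarrow> x < y \<Longrightarrow> y < \<delta> \<Longrightarrow> \<bar>\<rho> y - \<rho> x\<bar> \<le> (y - x) / 3"
    using increments_small_near_0[OF diff lim, of "1/3"] by auto
  have "\<rho> xs \<le> 2 * cmod (exp (\<i> * complex_of_real xs) - complex_of_real (1 - \<rho> x) * exp (\<i> * complex_of_real x))"
    if "0 < x" "x < xs" "xs < min \<delta> (1/2)" for x xs
  proof -
    have "\<bar>\<rho> xs - \<rho> x\<bar> \<le> (xs - x) / 3"
      using increment that by simp
    then have "\<rho> xs \<le> \<rho> x + (xs - x) / 3"
      by linarith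
    also have "\<dots> \<le> 2 * cmod (exp (\<i> * complex_of_real (xs - x)) - complex_of_real (1 - \<rho> x))"
      using norm_exp_i_minus_real_ge[of "xs - x" "\<rho> x"] that by simp
    finally show ?thesis
      by (simp only: norm_exp_i_diff_rotate)
  qed
  then show ?thesis
    using \<open>\<delta> > 0\<close> by (intro exI[of _ "min \<delta> (1/2)"]) (simp add: Let_def)
qed

end
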